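(* In the click-through auction setting with $n\ge 2$ bidders, suppose the environment is symmetric, i.e. the random variables $v_1r_1,\dots,v_nr_n$ (with $r\sim G$, $G$ of finite support) are exchangeable. Then for every $\varepsilon>0$ there exists a calibrated (correlated) information structure whose revenue is at least $\mathbb{E}[\max_i v_ir_i]-\varepsilon$.
   Context: Setting. There are $n\ge 2$ bidders; bidder $i$ has a known value per click $v_i\ge 0$. A vector of click-through rates (CTRs) $r=(r_1,\dots,r_n)\in[0,1]^n$ is drawn from a prior distribution $G$ with finite support (mass function $g$). An information structure is a probability distribution $x$ with finite support on pairs $(r,s)\in[0,1]^n\times[0,1]^n$ with $\sum_s x(r,s)=g(r)$ for all $r$. Given signals $s$, the winner $i^*$ is a bidder maximizing $v_is_i$, ties broken uniformly at random; the price per click is $p_{i^*}=\max_{j\neq i^*}v_js_j/s_{i^*}$ (revenue $0$ if $s_{i^*}=0$), paid only upon a click, which occurs with probability $r_{i^*}$. Revenue is $\mathbb{E}[r_{i^*}p_{i^*}]$. Calibrated: $\mathbb{E}[r_i\mid s_i=t]=t$ for every $i$ and every $t$ with $\Pr[s_i=t]>0$. Independent: $\mathbb{E}[r_i\mid s]=\mathbb{E}[r_i\mid s_i]$ for all $i$ and all $s$ in the support; correlated means not independent. The quantity $\mathbb{E}[\max_iv_ir_i]$ is the (full) social surplus. *)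

theory Defs
  imports "HOL-Probability.Probability"
begin

definition in_unit_cube :: "('b \<Rightarrow> real) \<Rightarrow> bool" where
  "in_unit_cube r \<longleftrightarrow> (\<forall>i. 0 \<le> r i \<and> r i \<le> 1)"

definition info_structure ::
  "('b \<Rightarrow> real) pmf \<Rightarrow> (('b \<Rightarrow> real) \<times> ('b \<Rightarrow> real)) pmf \<Rightarrow> bool" where
  "info_structure G x \<longleftrightarrow> finite (set_pmf x) \<and> map_pmf fst x = G \<and>
     (\<forall>rs \<in> set_pmf x. in_unit_cube (snd rs))"

definition calibrated :: "(('b \<Rightarrow> real) \<times> ('b \<Rightarrow> real)) pmf \<Rightarrow> bool" where
  "calibrated x \<longleftrightarrow> (\<forall>i t. measure_pmf.prob x {rs. snd rs i = t} > 0 \<longrightarrow>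
      measure_pmf.expectation (cond_pmf x {rs. snd rs i = t}) (\<lambda>rs. fst rs i) = t)"

definition winners :: "('b \<Rightarrow> real) \<Rightarrow> ('b \<Rightarrow> real) \<Rightarrow> 'b set" where
  "winners v s = {i. \<forall>j. v j * s j \<le> v i * s i}"

definition price :: "('b::finite \<Rightarrow> real) \<Rightarrow> ('b \<Rightarrow> real) \<Rightarrow> 'b \<Rightarrow> real" where
  "price v s i = (if s i = 0 then 0 else Max ((\<lambda>j. v j * s j) ` (UNIV - {i})) / s i)"

definition revenue_at :: "('b::finite \<Rightarrow> real) \<Rightarrow> ('b \<Rightarrow> real) \<Rightarrow> ('b \<Rightarrow> real) \<Rightarrow> real" where
  "revenue_at v r s = (\<Sum>i\<in>winners v s. (1 / real (card (winners v s))) * (r i * price v s i))"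

definition revenue :: "('b::finite \<Rightarrow> real) \<Rightarrow> (('b \<Rightarrow> real) \<times> ('b \<Rightarrow> real)) pmf \<Rightarrow> real" where
  "revenue v x = measure_pmf.expectation x (\<lambda>rs. revenue_at v (fst rs) (snd rs))"

definition surplus :: "('b::finite \<Rightarrow> real) \<Rightarrow> ('b \<Rightarrow> real) pmf \<Rightarrow> real" where
  "surplus v G = measure_pmf.expectation G (\<lambda>r. Max (range (\<lambda>i. v i * r i)))"

definition exchangeable_env :: "('b \<Rightarrow> real) \<Rightarrow> ('b \<Rightarrow> real) pmf \<Rightarrow> bool" where
  "exchangeable_env v G \<longleftrightarrow> (\<forall>\<pi>. \<pi> permutes (UNIV :: 'b set) \<longrightarrow>
     map_pmf (\<lambda>r i. v (\<pi> i) * r (\<pi> i)) G = map_pmf (\<lambda>r i. v i * r i) G)"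

end

theory Submission
  imports Defs
begin

(* Write u_i = v_i r_i for the score of bidder i and S = E[max_i u_i].  By exchangeability all
   bidders have the same mean score E[u_i], of which the part earned while being the (uniformly
   tie-broken) winner is S/n.  If some value is 0, or E[u_i] >= S, the structure revealing only
   E[r] already earns at least S.  Otherwise draw r ~ G, a rung k in {1..K} with probability
   proportional to k, and a winner i among the maximizers of u; signal the score y_k to i and
   the score y_(k-1) to everybody else.  Then i wins alone and pays y_(k-1)/y_k times his score,
   so the revenue is S * E[y_(k-1)/y_k].  A bidder sees the score y_k either as the winner at
   rung k or as a loser at rung k+1, and y_k is the matching mixture of the winner's and a
   loser's mean score, which makes the structure calibrated.  As y_1 >= S/(2n-1) and every rung
   has probability at most 2/K, telescoping bounds the relative loss E[1 - y_(k-1)/y_k] by 4n/K. *)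

lemma calibratedI:
  fixes x :: "(('b \<Rightarrow> real) \<times> ('b \<Rightarrow> real)) pmf"
  assumes finite: "finite (set_pmf x)"
    and balance: "\<And>i t. measure_pmf.expectation x (\<lambda>rs. indicator {rs. snd rs i = t} rs * fst rs i)
                         = t * measure_pmf.prob x {rs. snd rs i = t}"
  shows "calibrated x"
  unfolding calibrated_def
proof (intro allI impI)
  fix i t
  let ?A = "{rs::('b \<Rightarrow> real) \<times> ('b \<Rightarrow> real). snd rs i = t}"
  assume pos: "measure_pmf.prob x ?A > 0"
  then have ne: "set_pmf x \<inter> ?A \<noteq> {}"
    using measure_pmf_zero_iff[of x ?A] by auto
  have "measure_pmf.expectation (cond_pmf x ?A) (\<lambda>rs. fst rs i)
      = (\<Sum>a\<in>set_pmf x. fst a i * pmf (cond_pmf x ?A) a)"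
    by (rule integral_measure_pmf_real[OF finite]) (use ne in auto)
  also have "\<dots> = (\<Sum>a\<in>set_pmf x. indicator ?A a * fst a i * pmf x a) / measure_pmf.prob x ?A"
    by (simp add: pmf_cond[OF ne] sum_divide_distrib indicator_def, intro sum.cong refl, auto)
  also have "(\<Sum>a\<in>set_pmf x. indicator ?A a * fst a i * pmf x a)
      = measure_pmf.expectation x (\<lambda>rs. indicator ?A rs * fst rs i)"
    by (rule integral_measure_pmf_real[OF finite, symmetric]) auto
  finally show "measure_pmf.expectation (cond_pmf x ?A) (\<lambda>rs. fst rs i) = t"
    using pos balance by simp
qed

lemma ex_other_element:
  assumes "CARD('b::finite) \<ge> 2"
  shows "\<exists>j::'b. j \<noteq> i"
  using assms by (metis card_le_Suc0_iff_eq finite not_less_eq_eq numeral_2_eq_2)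

lemma price_nonneg:
  fixes v :: "'b::finite \<Rightarrow> real"
  assumes "CARD('b) \<ge> 2" "\<And>j. v j \<ge> 0" "\<And>j. s j \<ge> 0"
  shows "price v s i \<ge> 0"
proof -
  obtain j where "j \<noteq> i"
    using ex_other_element[OF assms(1)] by blast
  then have "v j * s j \<le> Max ((\<lambda>j. v j * s j) ` (UNIV - {i}))"
    by (intro Max_ge) auto
  moreover have "v j * s j \<ge> 0"
    using assms by simp
  ultimately have "Max ((\<lambda>j. v j * s j) ` (UNIV - {i})) \<ge> 0"
    by linarith
  then show ?thesis
    unfolding price_def using assms by (auto intro!: divide_nonneg_nonneg)
qed

lemma revenue_nonneg:
  fixes v :: "'b::finite \<Rightarrow> real"
  assumes "CARD('b) \<ge> 2" "\<And>j. v j \<ge> 0" "finite (set_pmf x)"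
    and "\<And>rs. rs \<in> set_pmf x \<Longrightarrow> in_unit_cube (fst rs) \<and> in_unit_cube (snd rs)"
  shows "revenue v x \<ge> 0"
proof -
  have "revenue v x = (\<Sum>rs\<in>set_pmf x. revenue_at v (fst rs) (snd rs) * pmf x rs)"
    unfolding revenue_def by (rule integral_measure_pmf_real[OF assms(3)]) auto
  also have "\<dots> \<ge> 0"
    unfolding revenue_at_def
    by (intro sum_nonneg mult_nonneg_nonneg price_nonneg)
       (use assms in \<open>auto simp: in_unit_cube_def\<close>)
  finally show ?thesis .
qed

definition maximizers :: "('b \<Rightarrow> real) \<Rightarrow> 'b set" where
  "maximizers u = {i. \<forall>j. u j \<le> u i}"

definition tie_share :: "('b \<Rightarrow> real) \<Rightarrow> 'b \<Rightarrow> real" where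
  "tie_share u j = (if j \<in> maximizers u then 1 / real (card (maximizers u)) else 0)"

lemma winners_eq_maximizers: "winners v r = maximizers (\<lambda>i. v i * r i)"
  by (simp add: winners_def maximizers_def)

lemma mem_maximizers_iff:
  fixes u :: "'b::finite \<Rightarrow> real"
  shows "j \<in> maximizers u \<longleftrightarrow> u j = Max (range u)"
  by (auto simp: maximizers_def intro!: Max_eqI[symmetric])

lemma maximizers_nonempty:
  fixes u :: "'b::finite \<Rightarrow> real"
  shows "maximizers u \<noteq> {}"
proof -
  have "Max (range u) \<in> range u"
    by (rule Max_in) auto
  then obtain j where "Max (range u) = u j"
    by (rule rangeE)
  then show ?thesis
    using mem_maximizers_iff[of j u] by auto
qed

lemma winners_nonempty:
  fixes v :: "'b::finite \<Rightarrow> real"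
  shows "winners v r \<noteq> {}"
  by (simp add: winners_eq_maximizers maximizers_nonempty)

lemma maximizers_permute:
  assumes "\<pi> permutes (UNIV :: 'b set)"
  shows "maximizers (u \<circ> \<pi>) = \<pi> -` maximizers u"
  using permutes_surj[OF assms] by (auto simp: maximizers_def) (metis surjD)

lemma tie_share_permute:
  fixes u :: "'b::finite \<Rightarrow> real"
  assumes "\<pi> permutes (UNIV :: 'b set)"
  shows "tie_share (u \<circ> \<pi>) j = tie_share u (\<pi> j)"
proof -
  have "card (maximizers (u \<circ> \<pi>)) = card (maximizers u)"
    unfolding maximizers_permute[OF assms]
    by (rule card_vimage_inj) (use assms in \<open>auto simp: permutes_inj permutes_surj\<close>)
  then show ?thesis
    unfolding tie_share_def using maximizers_permute[OF assms] by auto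
qed

lemma tie_share_nonneg: "tie_share u j \<ge> 0"
  by (simp add: tie_share_def)

lemma tie_share_le_1:
  fixes u :: "'b::finite \<Rightarrow> real"
  shows "tie_share u j \<le> 1"
proof -
  have "j \<in> maximizers u \<Longrightarrow> card (maximizers u) \<ge> 1"
    by (metis One_nat_def Suc_leI card_gt_0_iff empty_iff finite)
  then show ?thesis
    by (auto simp: tie_share_def)
qed

lemma sum_tie_share_weighted:
  fixes u :: "'b::finite \<Rightarrow> real"
  shows "(\<Sum>j\<in>UNIV. f j * tie_share u j) = (\<Sum>j\<in>maximizers u. f j) / card (maximizers u)"
proof -
  have "(\<Sum>j\<in>UNIV. f j * tie_share u j)
      = (\<Sum>j\<in>UNIV. if j \<in> maximizers u then f j / card (maximizers u) else 0)"
    by (intro sum.cong) (auto simp: tie_share_def)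
  then show ?thesis
    by (simp add: sum.If_cases sum_divide_distrib)
qed

lemma sum_tie_share:
  fixes u :: "'b::finite \<Rightarrow> real"
  shows "(\<Sum>j\<in>UNIV. tie_share u j) = 1"
  using sum_tie_share_weighted[of "\<lambda>_. 1" u] maximizers_nonempty[of u] by simp

lemma sum_mult_tie_share:
  fixes u :: "'b::finite \<Rightarrow> real"
  shows "(\<Sum>j\<in>UNIV. u j * tie_share u j) = Max (range u)"
proof -
  have "(\<Sum>j\<in>maximizers u. u j) = (\<Sum>j\<in>maximizers u. Max (range u))"
    by (intro sum.cong) (auto simp: mem_maximizers_iff)
  then show ?thesis
    using sum_tie_share_weighted[of u u] maximizers_nonempty[of u] by simp
qed

lemma mean_over_maximizers_split:
  fixes u :: "'b::finite \<Rightarrow> real"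
  shows "(\<Sum>i\<in>maximizers u. F (i = j)) / card (maximizers u)
       = tie_share u j * F True + (1 - tie_share u j) * F False"
proof -
  let ?M = "maximizers u"
  have c: "real (card ?M) > 0"
    using maximizers_nonempty[of u] by (simp add: card_gt_0_iff)
  show ?thesis
  proof (cases "j \<in> ?M")
    case True
    have "(\<Sum>i\<in>?M. F (i = j)) = F True + (\<Sum>i\<in>?M - {j}. F (i = j))"
      using True by (simp add: sum.remove)
    also have "(\<Sum>i\<in>?M - {j}. F (i = j)) = (\<Sum>i\<in>?M - {j}. F False)"
      by (intro sum.cong) auto
    also have "\<dots> = (real (card ?M) - 1) * F False"
      using True c by (simp add: card_Diff_singleton of_nat_diff)
    finally have sum_eq: "(\<Sum>i\<in>?M. F (i = j)) = F True + (real (card ?M) - 1) * F False" .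
    have "x / c = 1 / c * a + (1 - 1 / c) * b" if "c > 0" "x = a + (c - 1) * b"
      for x a b c :: real
      using that by (simp add: field_simps)
    from this[OF c sum_eq] show ?thesis
      using True by (simp add: tie_share_def)
  next
    case False
    then have "(\<Sum>i\<in>?M. F (i = j)) = (\<Sum>i\<in>?M. F False)"
      by (intro sum.cong refl arg_cong[where f=F]) auto
    then show ?thesis
      using False c by (simp add: tie_share_def card_gt_0_iff)
  qed
qed

locale symmetric_env =
  fixes v :: "'b::finite \<Rightarrow> real" and G :: "('b \<Rightarrow> real) pmf"
  assumes two_bidders: "CARD('b) \<ge> 2"
    and values_nonneg: "\<And>i. v i \<ge> 0"
    and finite_G: "finite (set_pmf G)"
    and ctr_in_unit_cube: "\<And>r. r \<in> set_pmf G \<Longrightarrow> in_unit_cube r"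
    and exchangeable: "exchangeable_env v G"
begin

abbreviation EG :: "(('b \<Rightarrow> real) \<Rightarrow> real) \<Rightarrow> real" where
  "EG f \<equiv> measure_pmf.expectation G f"

abbreviation S :: real where
  "S \<equiv> surplus v G"

definition score :: "('b \<Rightarrow> real) \<Rightarrow> 'b \<Rightarrow> real" where
  "score r = (\<lambda>i. v i * r i)"

definition mean_score :: real where
  "mean_score = (\<Sum>j\<in>UNIV. EG (\<lambda>r. score r j)) / CARD('b)"

lemma winners_eq_maximizers_score: "winners v r = maximizers (score r)"
  by (simp add: winners_eq_maximizers score_def)

lemma integrable_G [simp]: "integrable (measure_pmf G) (f :: _ \<Rightarrow> real)"
  using finite_G by (rule integrable_measure_pmf_finite)

lemma expectation_G_eq_sum: "EG f = (\<Sum>r\<in>set_pmf G. f r * pmf G r)"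
  by (rule integral_measure_pmf_real[OF finite_G]) auto

lemma expectation_G_mono: "(\<And>r. r \<in> set_pmf G \<Longrightarrow> f r \<le> g r) \<Longrightarrow> EG f \<le> EG g"
  by (intro integral_mono_AE) (auto simp: AE_measure_pmf_iff)

lemma ctr_bounds: "r \<in> set_pmf G \<Longrightarrow> 0 \<le> r i \<and> r i \<le> 1"
  using ctr_in_unit_cube[of r] by (auto simp: in_unit_cube_def)

lemma surplus_eq: "S = EG (\<lambda>r. Max (range (score r)))"
  by (simp add: surplus_def score_def)

lemma expectation_score_permute:
  assumes "\<pi> permutes (UNIV :: 'b set)"
  shows "EG (\<lambda>r. \<Phi> (score r \<circ> \<pi>)) = EG (\<lambda>r. \<Phi> (score r))"
proof -
  have "map_pmf (\<lambda>r. score r \<circ> \<pi>) G = map_pmf score G"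
    using exchangeable assms unfolding exchangeable_env_def by (simp add: o_def score_def[abs_def])
  then have "measure_pmf.expectation (map_pmf (\<lambda>r. score r \<circ> \<pi>) G) \<Phi>
      = measure_pmf.expectation (map_pmf score G) \<Phi>"
    by simp
  then show ?thesis
    by simp
qed

lemma expectation_symmetric_eq_average:
  assumes symmetric: "\<And>\<pi> u j. \<pi> permutes (UNIV :: 'b set) \<Longrightarrow> \<Psi> j (u \<circ> \<pi>) = \<Psi> (\<pi> j) u"
  shows "EG (\<lambda>r. \<Psi> j (score r)) = (\<Sum>j'\<in>UNIV. EG (\<lambda>r. \<Psi> j' (score r))) / CARD('b)"
proof -
  have same: "EG (\<lambda>r. \<Psi> j' (score r)) = EG (\<lambda>r. \<Psi> j (score r))" for j'
  proof -
    let ?\<pi> = "Transposition.transpose j j'"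
    have \<pi>: "?\<pi> permutes (UNIV :: 'b set)"
      by (rule permutes_swap_id) auto
    have "EG (\<lambda>r. \<Psi> j' (score r)) = EG (\<lambda>r. \<Psi> (?\<pi> j) (score r))"
      by simp
    also have "\<dots> = EG (\<lambda>r. \<Psi> j (score r \<circ> ?\<pi>))"
      using symmetric[OF \<pi>] by simp
    also have "\<dots> = EG (\<lambda>r. \<Psi> j (score r))"
      by (rule expectation_score_permute[OF \<pi>])
    finally show ?thesis .
  qed
  have "(\<Sum>j'\<in>UNIV. EG (\<lambda>r. \<Psi> j' (score r))) = (\<Sum>j'\<in>(UNIV :: 'b set). EG (\<lambda>r. \<Psi> j (score r)))"
    by (rule sum.cong[OF refl same])
  then show ?thesis
    using two_bidders by simp
qed

lemma expectation_tie_share: "EG (\<lambda>r. tie_share (score r) j) = 1 / CARD('b)"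
proof -
  have "EG (\<lambda>r. tie_share (score r) j) = (\<Sum>j'\<in>UNIV. EG (\<lambda>r. tie_share (score r) j')) / CARD('b)"
    by (rule expectation_symmetric_eq_average[where \<Psi> = "\<lambda>j u. tie_share u j"])
       (simp add: tie_share_permute)
  also have "(\<Sum>j'\<in>UNIV. EG (\<lambda>r. tie_share (score r) j')) = EG (\<lambda>r. \<Sum>j'\<in>UNIV. tie_share (score r) j')"
    by (rule Bochner_Integration.integral_sum[symmetric]) simp
  finally show ?thesis
    by (simp add: sum_tie_share)
qed

lemma expectation_score_tie_share: "EG (\<lambda>r. score r j * tie_share (score r) j) = S / CARD('b)"
proof -
  have "EG (\<lambda>r. score r j * tie_share (score r) j)
      = (\<Sum>j'\<in>UNIV. EG (\<lambda>r. score r j' * tie_share (score r) j')) / CARD('b)"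
    by (rule expectation_symmetric_eq_average[where \<Psi> = "\<lambda>j u. u j * tie_share u j"])
       (simp add: tie_share_permute)
  also have "(\<Sum>j'\<in>UNIV. EG (\<lambda>r. score r j' * tie_share (score r) j'))
      = EG (\<lambda>r. \<Sum>j'\<in>UNIV. score r j' * tie_share (score r) j')"
    by (rule Bochner_Integration.integral_sum[symmetric]) simp
  finally show ?thesis
    by (simp add: sum_mult_tie_share surplus_eq)
qed

lemma expectation_score: "EG (\<lambda>r. score r j) = mean_score"
  unfolding mean_score_def
  by (rule expectation_symmetric_eq_average[where \<Psi> = "\<lambda>j u. u j"]) simp

lemma expectation_score_not_winning:
  "EG (\<lambda>r. score r j * (1 - tie_share (score r) j)) = mean_score - S / CARD('b)"
  using expectation_score[of j] expectation_score_tie_share[of j]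
  by (simp add: right_diff_distrib)

lemma surplus_le_value: "S \<le> v j"
proof -
  have "S / CARD('b) = v j * EG (\<lambda>r. r j * tie_share (score r) j)"
    using expectation_score_tie_share[of j] by (simp add: score_def mult.assoc)
  also have "\<dots> \<le> v j * EG (\<lambda>r. tie_share (score r) j)"
  proof (intro mult_left_mono expectation_G_mono values_nonneg)
    fix r assume "r \<in> set_pmf G"
    then show "r j * tie_share (score r) j \<le> tie_share (score r) j"
      using ctr_bounds[of r j] tie_share_nonneg[of "score r" j] by (simp add: mult_left_le_one_le)
  qed
  also have "\<dots> = v j / CARD('b)"
    by (simp add: expectation_tie_share)
  finally show ?thesis
    using two_bidders by (simp add: divide_right_mono field_simps)
qed

lemma surplus_div_le_mean_score: "S / CARD('b) \<le> mean_score"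
proof -
  have "0 \<le> EG (\<lambda>r. score r j * (1 - tie_share (score r) j))" for j
    by (intro integral_nonneg_AE AE_pmfI mult_nonneg_nonneg)
       (use ctr_bounds tie_share_le_1 values_nonneg in \<open>auto simp: score_def\<close>)
  then show ?thesis
    by (simp add: expectation_score_not_winning)
qed

lemma surplus_nonneg: "S \<ge> 0"
proof -
  have "0 \<le> EG (\<lambda>r. score r j * tie_share (score r) j)" for j
    by (intro integral_nonneg_AE AE_pmfI mult_nonneg_nonneg)
       (use ctr_bounds tie_share_nonneg values_nonneg in \<open>auto simp: score_def\<close>)
  then show ?thesis
    using two_bidders by (simp add: expectation_score_tie_share zero_le_divide_iff)
qed

lemma surplus_nonpos_if_value_zero: "v j = 0 \<Longrightarrow> S \<le> 0"
  using expectation_score_tie_share[of j] two_bidders by (simp add: score_def)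

definition mean_ctr :: "'b \<Rightarrow> real" where
  "mean_ctr j = EG (\<lambda>r. r j)"

definition uninformative :: "(('b \<Rightarrow> real) \<times> ('b \<Rightarrow> real)) pmf" where
  "uninformative = map_pmf (\<lambda>r. (r, mean_ctr)) G"

lemma mean_ctr_bounds: "0 \<le> mean_ctr j \<and> mean_ctr j \<le> 1"
proof
  show "0 \<le> mean_ctr j"
    unfolding mean_ctr_def by (intro integral_nonneg_AE AE_pmfI) (simp add: ctr_bounds)
  have "mean_ctr j \<le> EG (\<lambda>_. 1)"
    unfolding mean_ctr_def by (rule expectation_G_mono) (simp add: ctr_bounds)
  then show "mean_ctr j \<le> 1"
    by simp
qed

lemma info_structure_uninformative: "info_structure G uninformative"
  using finite_G mean_ctr_bounds
  by (auto simp: info_structure_def uninformative_def pmf.map_comp o_def in_unit_cube_def)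

lemma calibrated_uninformative: "calibrated uninformative"
proof (rule calibratedI)
  show "finite (set_pmf uninformative)"
    using finite_G by (simp add: uninformative_def)
  fix i t
  show "measure_pmf.expectation uninformative (\<lambda>rs. indicator {rs. snd rs i = t} rs * fst rs i)
      = t * measure_pmf.prob uninformative {rs. snd rs i = t}"
    by (cases "mean_ctr i = t") (auto simp: uninformative_def indicator_def mean_ctr_def)
qed

lemma revenue_uninformative_nonneg: "revenue v uninformative \<ge> 0"
  by (rule revenue_nonneg[OF two_bidders values_nonneg])
     (use finite_G ctr_in_unit_cube mean_ctr_bounds in \<open>auto simp: uninformative_def in_unit_cube_def\<close>)

lemma revenue_uninformative:
  assumes values_pos: "\<And>j. v j > 0" and mean_pos: "mean_score > 0"
  shows "revenue v uninformative = mean_score"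
proof -
  have equal_bids: "v j * mean_ctr j = mean_score" for j
    using expectation_score[of j] by (simp add: mean_ctr_def score_def)
  then have "winners v mean_ctr = UNIV"
    by (simp add: winners_def)
  moreover have "price v mean_ctr i = v i" for i
  proof -
    have "UNIV - {i} \<noteq> {}"
      using ex_other_element[OF two_bidders, of i] by blast
    then have "(\<lambda>j. v j * mean_ctr j) ` (UNIV - {i}) = {mean_score}"
      by (auto simp: equal_bids)
    moreover have "mean_ctr i \<noteq> 0"
      using equal_bids[of i] mean_pos by auto
    ultimately show ?thesis
      unfolding price_def using equal_bids[of i] by (simp add: field_simps)
  qed
  ultimately have "revenue v uninformative = EG (\<lambda>r. \<Sum>i\<in>UNIV. score r i / CARD('b))"
    by (simp add: revenue_def uninformative_def revenue_at_def score_def mult.commute)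
  also have "\<dots> = mean_score"
    using two_bidders by (simp add: expectation_score)
  finally show ?thesis .
qed

lemma surplus_le_revenue_uninformative:
  assumes "(\<forall>j. v j > 0) \<Longrightarrow> S \<le> mean_score"
  shows "S \<le> revenue v uninformative"
proof (cases "\<forall>j. v j > 0")
  case True
  then have "S \<le> mean_score"
    by (rule assms)
  then show ?thesis
    using revenue_uninformative True revenue_uninformative_nonneg
    by (cases "mean_score > 0") auto
next
  case False
  then obtain j where "\<not> v j > 0"
    by blast
  then have "v j = 0"
    using values_nonneg[of j] by linarith
  then show ?thesis
    using surplus_nonpos_if_value_zero revenue_uninformative_nonneg by (meson order_trans)
qed

end

locale ladder = symmetric_env v G for v :: "'b::finite \<Rightarrow> real" and G +
  fixes K :: nat
  assumes K_ge_2: "K \<ge> 2"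
    and values_pos: "\<And>j. v j > 0"
    and mean_score_less_surplus: "mean_score < S"
begin

definition rung_weight :: "nat \<Rightarrow> real" where
  "rung_weight k = (if 1 \<le> k \<and> k \<le> K then real k else 0)"

definition rung_prob :: "nat \<Rightarrow> real" where
  "rung_prob k = rung_weight k / (\<Sum>l\<in>{1..K}. real l)"

definition rung_frac :: "nat \<Rightarrow> real" where
  "rung_frac k = rung_weight k / (rung_weight k + (real CARD('b) - 1) * rung_weight (Suc k))"

(* E[u_j | j does not win] = (E[u_j] - S/n) / (1 - 1/n) *)
definition loser_score :: real where
  "loser_score = (CARD('b) * mean_score - S) / (real CARD('b) - 1)"

(* rung k is the mixture of S and loser_score with the weights rung_prob k and
   (n - 1) * rung_prob (Suc k) of winning at rung k and of losing at rung k + 1. *)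
definition rung :: "nat \<Rightarrow> real" where
  "rung k = loser_score + (S - loser_score) * rung_frac k"

definition rung_pmf :: "nat pmf" where
  "rung_pmf = pmf_of_list (map (\<lambda>k. (k, rung_prob k)) [1..<K+1])"

definition ladder_draw :: "(('b \<Rightarrow> real) \<times> nat \<times> 'b) pmf" where
  "ladder_draw = bind_pmf G (\<lambda>r. bind_pmf rung_pmf (\<lambda>k.
     map_pmf (\<lambda>i. (r, k, i)) (pmf_of_set (winners v r))))"

definition ladder_signal :: "nat \<Rightarrow> 'b \<Rightarrow> 'b \<Rightarrow> real" where
  "ladder_signal k i = (\<lambda>j. (if j = i then rung k else rung (k - 1)) / v j)"

definition ladder_structure :: "(('b \<Rightarrow> real) \<times> ('b \<Rightarrow> real)) pmf" where
  "ladder_structure = map_pmf (\<lambda>(r, k, i). (r, ladder_signal k i)) ladder_draw"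

lemma rung_prob_eq_0: "k = 0 \<or> k > K \<Longrightarrow> rung_prob k = 0"
  by (auto simp: rung_prob_def rung_weight_def)

lemma sum_rung_weight_pos: "(\<Sum>k\<in>{1..K}. real k) > 0"
  using K_ge_2 by (intro sum_pos) auto

lemma rung_prob_nonneg: "rung_prob k \<ge> 0"
  using sum_rung_weight_pos by (simp add: rung_prob_def rung_weight_def)

lemma sum_rung_prob: "(\<Sum>k\<in>{1..K}. rung_prob k) = 1"
proof -
  have "(\<Sum>k\<in>{1..K}. rung_prob k) = (\<Sum>k\<in>{1..K}. real k) / (\<Sum>k\<in>{1..K}. real k)"
    unfolding rung_prob_def sum_divide_distrib by (intro sum.cong) (auto simp: rung_weight_def)
  then show ?thesis
    using sum_rung_weight_pos by simp
qed

lemma rung_prob_le: "rung_prob k \<le> 2 / K"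
proof -
  have "rung_prob k \<le> K / (\<Sum>k\<in>{1..K}. real k)"
    unfolding rung_prob_def rung_weight_def using sum_rung_weight_pos by (intro divide_right_mono) auto
  also have "\<dots> \<le> 2 / K"
  proof -
    have "2 * (\<Sum>k\<in>{1..K}. real k) = K * (K + 1)"
      by (induction K) (simp_all add: algebra_simps)
    then show ?thesis
      using sum_rung_weight_pos K_ge_2 by (simp add: field_simps)
  qed
  finally show ?thesis .
qed

lemma pmf_rung_pmf: "pmf rung_pmf k = rung_prob k"
  and set_rung_pmf: "set_pmf rung_pmf \<subseteq> {1..K}"
proof -
  let ?xs = "map (\<lambda>k. (k, rung_prob k)) [1..<K+1]"
  have wf: "pmf_of_list_wf ?xs"
  proof (rule pmf_of_list_wfI)
    have "sum_list (map snd ?xs) = sum_list (map rung_prob [1..<K+1])"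
      by (simp add: o_def)
    also have "\<dots> = sum rung_prob (set [1..<K+1])"
      by (simp only: sum_set_upt_conv_sum_list_nat)
    also have "\<dots> = (\<Sum>k\<in>{1..K}. rung_prob k)"
      by (rule sum.cong) auto
    finally have "sum_list (map snd ?xs) = (\<Sum>k\<in>{1..K}. rung_prob k)" .
    then show "sum_list (map snd ?xs) = 1"
      using sum_rung_prob by (rule trans)
  qed (auto simp: rung_prob_nonneg)
  have "pmf rung_pmf k = sum_list (map rung_prob (filter (\<lambda>k'. k' = k) [1..<K+1]))"
    unfolding rung_pmf_def pmf_pmf_of_list[OF wf] by (simp add: filter_map o_def)
  also have "\<dots> = (\<Sum>k'\<in>{1..K} \<inter> {k}. rung_prob k')"
    by (subst sum_list_distinct_conv_sum_set) (auto intro!: sum.cong)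
  also have "\<dots> = rung_prob k"
    using rung_prob_eq_0[of k] by (cases "1 \<le> k \<and> k \<le> K") auto
  finally show "pmf rung_pmf k = rung_prob k" .
  show "set_pmf rung_pmf \<subseteq> {1..K}"
    using set_pmf_of_list[OF wf] unfolding rung_pmf_def by auto
qed

lemma expectation_ladder_draw:
  "measure_pmf.expectation ladder_draw h = (\<Sum>r\<in>set_pmf G. pmf G r *
     (\<Sum>k\<in>{1..K}. rung_prob k * ((\<Sum>i\<in>winners v r. h (r, k, i)) / card (winners v r))))"
proof -
  have finite_rung_pmf: "finite (set_pmf rung_pmf)"
    using set_rung_pmf finite_subset by blast
  have inner: "measure_pmf.expectation (bind_pmf rung_pmf (\<lambda>k.
        map_pmf (\<lambda>i. (r, k, i)) (pmf_of_set (winners v r)))) h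
      = (\<Sum>k\<in>{1..K}. rung_prob k * ((\<Sum>i\<in>winners v r. h (r, k, i)) / card (winners v r)))" for r
    by (subst pmf_expectation_bind[of "{1..K}"])
       (use set_rung_pmf winners_nonempty[of v] in \<open>auto simp: pmf_rung_pmf integral_pmf_of_set\<close>)
  show ?thesis
    unfolding ladder_draw_def
    by (subst pmf_expectation_bind[OF finite_G])
       (use finite_rung_pmf winners_nonempty[of v] in \<open>auto simp: inner\<close>)
qed

lemma finite_ladder_draw: "finite (set_pmf ladder_draw)"
proof -
  have "set_pmf ladder_draw \<subseteq> set_pmf G \<times> {1..K} \<times> UNIV"
    using set_rung_pmf winners_nonempty[of v] by (auto simp: ladder_draw_def)
  then show ?thesis
    by (rule finite_subset) (simp add: finite_G)
qed

lemma expectation_ladder_draw_split: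
  "measure_pmf.expectation ladder_draw (\<lambda>(r, k, i). g r * F k (i = j))
   = (\<Sum>k\<in>{1..K}. rung_prob k * F k True) * EG (\<lambda>r. g r * tie_share (score r) j)
   + (\<Sum>k\<in>{1..K}. rung_prob k * F k False) * EG (\<lambda>r. g r * (1 - tie_share (score r) j))"
proof -
  have inner: "(\<Sum>i\<in>winners v r. g r * F k (i = j)) / card (winners v r)
      = g r * (tie_share (score r) j * F k True + (1 - tie_share (score r) j) * F k False)" for r k
    unfolding times_divide_eq_right[symmetric] sum_distrib_left[symmetric] winners_eq_maximizers_score
    by (simp only: mean_over_maximizers_split)
  have "measure_pmf.expectation ladder_draw (\<lambda>(r, k, i). g r * F k (i = j))
      = (\<Sum>r\<in>set_pmf G. pmf G r * (\<Sum>k\<in>{1..K}. rung_prob k *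
          (g r * (tie_share (score r) j * F k True + (1 - tie_share (score r) j) * F k False))))"
    by (simp add: expectation_ladder_draw inner case_prod_unfold)
  also have "\<dots> = (\<Sum>k\<in>{1..K}. rung_prob k * F k True) * EG (\<lambda>r. g r * tie_share (score r) j)
   + (\<Sum>k\<in>{1..K}. rung_prob k * F k False) * EG (\<lambda>r. g r * (1 - tie_share (score r) j))"
    by (simp add: expectation_G_eq_sum sum_distrib_left sum_distrib_right sum.distrib distrib_left
        mult_ac sum.swap[of _ "set_pmf G"])
  finally show ?thesis .
qed

lemma rung_frac_0: "rung_frac 0 = 0"
  by (simp add: rung_frac_def rung_weight_def)

lemma rung_frac_K: "rung_frac K = 1"
  using K_ge_2 by (simp add: rung_frac_def rung_weight_def)

lemma rung_frac_1: "rung_frac 1 = 1 / (2 * real CARD('b) - 1)"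
  using K_ge_2 by (simp add: rung_frac_def rung_weight_def field_simps)

lemma rung_frac_nonneg: "rung_frac k \<ge> 0"
  using two_bidders by (simp add: rung_frac_def rung_weight_def)

lemma rung_frac_le_1: "rung_frac k \<le> 1"
proof -
  have "0 \<le> rung_weight k" "0 \<le> (real CARD('b) - 1) * rung_weight (Suc k)"
    using two_bidders by (simp_all add: rung_weight_def)
  then show ?thesis
    unfolding rung_frac_def
    by (cases "rung_weight k + (real CARD('b) - 1) * rung_weight (Suc k) = 0")
       (auto simp: divide_le_eq_1)
qed

lemma rung_frac_less_Suc:
  assumes "k < K"
  shows "rung_frac k < rung_frac (Suc k)"
proof -
  have n: "real CARD('b) - 1 > 0"
    using two_bidders by simp
  consider "k = 0" | "Suc k = K" | "1 \<le> k" "Suc k < K"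
    using assms by linarith
  then show ?thesis
  proof cases
    case 1
    then show ?thesis
      using K_ge_2 n by (simp add: rung_frac_def rung_weight_def)
  next
    case 2
    have "(real CARD('b) - 1) * K > 0"
      using n K_ge_2 by simp
    then have "rung_frac k < 1"
      using 2 K_ge_2 by (simp add: rung_frac_def rung_weight_def divide_less_eq_1)
    then show ?thesis
      using 2 rung_frac_K by simp
  next
    case 3
    let ?c = "real CARD('b) - 1" and ?k = "real k"
    have "?k * ((?k + 1) + ?c * (?k + 2)) < (?k + 1) * (?k + ?c * (?k + 1))"
      using n by (simp add: algebra_simps)
    moreover have "?k + ?c * (?k + 1) > 0" "(?k + 1) + ?c * (?k + 2) > 0"
      using n 3 by (auto intro!: add_pos_pos mult_pos_pos)
    ultimately have "?k / (?k + ?c * (?k + 1)) < (?k + 1) / ((?k + 1) + ?c * (?k + 2))"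
      by (simp add: field_simps)
    then show ?thesis
      using 3 by (simp add: rung_frac_def rung_weight_def add.commute)
  qed
qed

lemma surplus_pos: "S > 0"
proof (rule ccontr)
  assume "\<not> S > 0"
  then have "S = 0"
    using surplus_nonneg by simp
  then show False
    using mean_score_less_surplus surplus_div_le_mean_score by simp
qed

lemma loser_score_nonneg: "loser_score \<ge> 0"
  using surplus_div_le_mean_score two_bidders by (simp add: loser_score_def field_simps)

lemma loser_score_less_surplus: "loser_score < S"
proof -
  have "CARD('b) * mean_score - S < (real CARD('b) - 1) * S"
    using mean_score_less_surplus two_bidders by (simp add: algebra_simps)
  then show ?thesis
    using two_bidders by (simp add: loser_score_def divide_less_eq mult.commute)
qed

lemma rung_0: "rung 0 = loser_score"
  by (simp add: rung_def rung_frac_0)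

lemma rung_K: "rung K = S"
  by (simp add: rung_def rung_frac_K)

lemma rung_ge_loser_score: "rung k \<ge> loser_score"
  using rung_frac_nonneg loser_score_less_surplus by (simp add: rung_def)

lemma rung_le_surplus: "rung k \<le> S"
proof -
  have "(S - loser_score) * rung_frac k \<le> S - loser_score"
    using rung_frac_le_1 loser_score_less_surplus by (simp add: mult_left_le)
  then show ?thesis
    by (simp add: rung_def)
qed

lemma rung_less:
  assumes "a < b" "b \<le> K"
  shows "rung a < rung b"
  using assms
proof (induction b)
  case (Suc b)
  have step: "rung b < rung (Suc b)"
    using rung_frac_less_Suc[of b] Suc.prems loser_score_less_surplus by (simp add: rung_def)
  show ?case
  proof (cases "a = b")
    case False
    then show ?thesis
      using Suc step by simp
  qed (use step in simp)
qed simp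

lemma rung_eq_iff: "a \<le> K \<Longrightarrow> b \<le> K \<Longrightarrow> rung a = rung b \<longleftrightarrow> a = b"
  using rung_less[of a b] rung_less[of b a] by (cases a b rule: linorder_cases) auto

lemma rung_pos: "1 \<le> k \<Longrightarrow> k \<le> K \<Longrightarrow> rung k > 0"
  using rung_less[of 0 k] rung_0 loser_score_nonneg by simp

lemma surplus_le_rung_1: "S \<le> (2 * real CARD('b) - 1) * rung 1"
proof -
  have "loser_score * rung_frac 1 \<le> loser_score"
    using loser_score_nonneg rung_frac_le_1[of 1] by (simp add: mult_left_le)
  then have "S * rung_frac 1 \<le> rung 1"
    by (simp add: rung_def algebra_simps)
  then have "S / (2 * real CARD('b) - 1) \<le> rung 1"
    by (simp only: rung_frac_1 times_divide_eq_right mult_1_right)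
  then show ?thesis
    using two_bidders by (simp add: divide_le_eq mult.commute)
qed

lemma rung_eq_conditional_mean_score:
  assumes "k \<le> K"
  shows "rung_prob k * (S / CARD('b)) + rung_prob (Suc k) * (mean_score - S / CARD('b))
       = rung k * (rung_prob k * (1 / CARD('b)) + rung_prob (Suc k) * (1 - 1 / CARD('b)))"
proof -
  let ?c = "real CARD('b) - 1" and ?w = "rung_weight" and ?W = "\<Sum>l\<in>{1..K}. real l"
  have c: "?c > 0"
    using two_bidders by simp
  have den: "?w k + ?c * ?w (Suc k) > 0"
    using assms c K_ge_2 by (cases "k = 0") (auto simp: rung_weight_def intro!: add_pos_nonneg)
  have key: "?w k * S + ?w (Suc k) * (?c * loser_score) = rung k * (?w k + ?c * ?w (Suc k))"
    using den by (simp add: rung_def rung_frac_def field_simps)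
  have "rung_prob k * (S / CARD('b)) + rung_prob (Suc k) * (mean_score - S / CARD('b))
      = (?w k * S + ?w (Suc k) * (CARD('b) * mean_score - S)) / (CARD('b) * ?W)"
    using two_bidders sum_rung_weight_pos by (simp add: rung_prob_def field_simps)
  also have "CARD('b) * mean_score - S = ?c * loser_score"
    using c by (simp add: loser_score_def)
  also note key
  also have "rung k * (?w k + ?c * ?w (Suc k)) / (CARD('b) * ?W)
      = rung k * (rung_prob k * (1 / CARD('b)) + rung_prob (Suc k) * (1 - 1 / CARD('b)))"
    using two_bidders sum_rung_weight_pos by (simp add: rung_prob_def field_simps)
  finally show ?thesis .
qed

lemma info_structure_ladder: "info_structure G ladder_structure"
  unfolding info_structure_def
proof (intro conjI ballI)
  show "finite (set_pmf ladder_structure)"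
    using finite_ladder_draw by (simp add: ladder_structure_def)
  show "map_pmf fst ladder_structure = G"
    by (simp add: ladder_structure_def ladder_draw_def map_bind_pmf pmf.map_comp o_def
        case_prod_unfold map_pmf_const bind_pmf_const bind_return_pmf')
  have "0 \<le> rung k / v j \<and> rung k / v j \<le> 1" for k j
    using rung_ge_loser_score[of k] loser_score_nonneg rung_le_surplus[of k] surplus_le_value[of j]
      values_pos[of j]
    by simp
  then show "in_unit_cube (snd rs)" if "rs \<in> set_pmf ladder_structure" for rs
    using that by (auto simp: ladder_structure_def in_unit_cube_def ladder_signal_def)
qed

lemma sum_rung_prob_at_rung:
  assumes "k0 \<le> K"
  shows "(\<Sum>k\<in>{1..K}. rung_prob k * (if rung k = rung k0 then 1 else 0)) = rung_prob k0"
proof -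
  have "(\<Sum>k\<in>{1..K}. rung_prob k * (if rung k = rung k0 then 1 else 0))
      = (\<Sum>k\<in>{1..K}. if k = k0 then rung_prob k else 0)"
    using assms by (intro sum.cong) (auto simp: rung_eq_iff)
  also have "\<dots> = rung_prob k0"
    using assms rung_prob_eq_0[of k0] by (cases "k0 = 0") auto
  finally show ?thesis .
qed

lemma sum_rung_prob_at_previous_rung:
  assumes "k0 \<le> K"
  shows "(\<Sum>k\<in>{1..K}. rung_prob k * (if rung (k - 1) = rung k0 then 1 else 0)) = rung_prob (Suc k0)"
proof -
  have "(\<Sum>k\<in>{1..K}. rung_prob k * (if rung (k - 1) = rung k0 then 1 else 0))
      = (\<Sum>k\<in>{1..K}. if k = Suc k0 then rung_prob k else 0)"
    using assms by (intro sum.cong) (auto simp: rung_eq_iff)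
  also have "\<dots> = rung_prob (Suc k0)"
    using rung_prob_eq_0[of "Suc k0"] by auto
  finally show ?thesis .
qed

lemma expectation_ladder_signal_event:
  "measure_pmf.expectation ladder_structure (\<lambda>rs. indicator {rs. snd rs j = t} rs * g (fst rs))
   = (\<Sum>k\<in>{1..K}. rung_prob k * (if rung k = t * v j then 1 else 0))
       * EG (\<lambda>r. g r * tie_share (score r) j)
   + (\<Sum>k\<in>{1..K}. rung_prob k * (if rung (k - 1) = t * v j then 1 else 0))
       * EG (\<lambda>r. g r * (1 - tie_share (score r) j))"
proof -
  define hit where "hit k b = (if rung (if b then k else k - 1) = t * v j then 1 else (0 :: real))"
    for k b
  have "indicator {rs. snd rs j = t} (r, ladder_signal k i) = hit k (i = j)"
    for r :: "'b \<Rightarrow> real" and k i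
    using values_pos[of j] by (auto simp: hit_def indicator_def ladder_signal_def field_simps)
  then have "measure_pmf.expectation ladder_structure (\<lambda>rs. indicator {rs. snd rs j = t} rs * g (fst rs))
      = measure_pmf.expectation ladder_draw (\<lambda>(r, k, i). g r * hit k (i = j))"
    unfolding ladder_structure_def integral_map_pmf
    by (intro arg_cong[where f = "measure_pmf.expectation ladder_draw"] ext) (auto simp: mult.commute)
  also have "\<dots> = (\<Sum>k\<in>{1..K}. rung_prob k * hit k True) * EG (\<lambda>r. g r * tie_share (score r) j)
      + (\<Sum>k\<in>{1..K}. rung_prob k * hit k False) * EG (\<lambda>r. g r * (1 - tie_share (score r) j))"
    by (rule expectation_ladder_draw_split)
  finally show ?thesis
    by (simp add: hit_def)
qed

lemma conditional_mean_ctr_at_rung: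
  assumes "k \<le> K"
  shows "rung_prob k * EG (\<lambda>r. r j * tie_share (score r) j)
         + rung_prob (Suc k) * EG (\<lambda>r. r j * (1 - tie_share (score r) j))
       = rung k / v j * (rung_prob k * (1 / CARD('b)) + rung_prob (Suc k) * (1 - 1 / CARD('b)))"
proof -
  let ?Rw = "EG (\<lambda>r. r j * tie_share (score r) j)"
    and ?Rl = "EG (\<lambda>r. r j * (1 - tie_share (score r) j))"
  have "v j * ?Rw = S / CARD('b)"
    using expectation_score_tie_share[of j] by (simp add: score_def mult.assoc)
  moreover have "v j * ?Rl = mean_score - S / CARD('b)"
    using expectation_score_not_winning[of j] unfolding score_def
    by (simp only: mult.assoc flip: Bochner_Integration.integral_mult_right_zero)
  ultimately have "v j * (rung_prob k * ?Rw + rung_prob (Suc k) * ?Rl)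
    = rung_prob k * (S / CARD('b)) + rung_prob (Suc k) * (mean_score - S / CARD('b))"
    by (simp only: distrib_left mult.left_commute[of "v j"])
  also have "\<dots> = rung k * (rung_prob k * (1 / CARD('b)) + rung_prob (Suc k) * (1 - 1 / CARD('b)))"
    by (rule rung_eq_conditional_mean_score[OF assms])
  finally show ?thesis
    using values_pos[of j] by (simp add: field_simps)
qed

lemma calibrated_ladder: "calibrated ladder_structure"
proof (rule calibratedI)
  show "finite (set_pmf ladder_structure)"
    using finite_ladder_draw by (simp add: ladder_structure_def)
  fix j t
  have prob: "measure_pmf.prob ladder_structure {rs. snd rs j = t}
      = measure_pmf.expectation ladder_structure (\<lambda>rs. indicator {rs. snd rs j = t} rs * 1)"
    by simp
  note event = expectation_ladder_signal_event[where g = "\<lambda>r. r j"]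
    expectation_ladder_signal_event[where g = "\<lambda>_. 1"]
  show "measure_pmf.expectation ladder_structure (\<lambda>rs. indicator {rs. snd rs j = t} rs * fst rs j)
      = t * measure_pmf.prob ladder_structure {rs. snd rs j = t}"
  proof (cases "\<exists>k0\<le>K. rung k0 = t * v j")
    case True
    then obtain k0 where k0: "k0 \<le> K" "rung k0 = t * v j"
      by blast
    have balance: "rung_prob k0 * EG (\<lambda>r. r j * tie_share (score r) j)
        + rung_prob (Suc k0) * EG (\<lambda>r. r j * (1 - tie_share (score r) j))
      = t * (rung_prob k0 * (1 / CARD('b)) + rung_prob (Suc k0) * (1 - 1 / CARD('b)))"
      using conditional_mean_ctr_at_rung[OF k0(1), of j] k0(2) values_pos[of j] by simp
    have "EG (\<lambda>r. 1 * tie_share (score r) j) = 1 / CARD('b)"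
      "EG (\<lambda>r. 1 * (1 - tie_share (score r) j)) = 1 - 1 / CARD('b)"
      by (simp_all add: expectation_tie_share)
    then show ?thesis
      unfolding prob event k0(2)[symmetric] sum_rung_prob_at_rung[OF k0(1)]
        sum_rung_prob_at_previous_rung[OF k0(1)]
      using balance by simp
  next
    case False
    then have "(\<Sum>k\<in>{1..K}. rung_prob k * (if rung k = t * v j then 1 else 0)) = 0"
      "(\<Sum>k\<in>{1..K}. rung_prob k * (if rung (k - 1) = t * v j then 1 else 0)) = 0"
      by (auto intro!: sum.neutral)
    then show ?thesis
      unfolding prob event by simp
  qed
qed

lemma revenue_at_ladder_signal:
  assumes k: "1 \<le> k" "k \<le> K" and i: "i \<in> winners v r"
  shows "revenue_at v r (ladder_signal k i) = Max (range (score r)) * (rung (k - 1) / rung k)"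
proof -
  have bids: "v l * ladder_signal k i l = (if l = i then rung k else rung (k - 1))" for l
    using values_pos[of l] by (simp add: ladder_signal_def)
  have less: "rung (k - 1) < rung k" and pos: "rung k > 0"
    using rung_less[of "k - 1" k] rung_pos k by simp_all
  have "winners v (ladder_signal k i) = {i}"
    unfolding winners_def bids using less by auto
  moreover have "(\<lambda>l. v l * ladder_signal k i l) ` (UNIV - {i}) = {rung (k - 1)}"
    unfolding bids using ex_other_element[OF two_bidders, of i] by auto
  then have "price v (ladder_signal k i) i = v i * (rung (k - 1) / rung k)"
    using pos values_pos[of i] by (simp add: price_def ladder_signal_def field_simps)
  moreover have "v i * r i = Max (range (score r))"
    using i by (simp add: winners_eq_maximizers_score mem_maximizers_iff score_def)
  ultimately show ?thesis
    by (simp add: revenue_at_def algebra_simps)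
qed

lemma revenue_ladder: "revenue v ladder_structure = S * (\<Sum>k\<in>{1..K}. rung_prob k * (rung (k - 1) / rung k))"
proof -
  have "revenue v ladder_structure = measure_pmf.expectation ladder_draw
      (\<lambda>(r, k, i). revenue_at v r (ladder_signal k i))"
    by (simp add: revenue_def ladder_structure_def case_prod_unfold)
  also have "\<dots> = (\<Sum>r\<in>set_pmf G. pmf G r * (\<Sum>k\<in>{1..K}. rung_prob k *
       ((\<Sum>i\<in>winners v r. Max (range (score r)) * (rung (k - 1) / rung k)) / card (winners v r))))"
    unfolding expectation_ladder_draw
    by (intro sum.cong refl arg_cong2[where f = "(*)"] arg_cong2[where f = "(/)"])
       (auto simp: revenue_at_ladder_signal)
  also have "\<dots> = (\<Sum>r\<in>set_pmf G. Max (range (score r)) * pmf G r)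
      * (\<Sum>k\<in>{1..K}. rung_prob k * (rung (k - 1) / rung k))"
    using winners_nonempty[of v]
    by (simp add: sum_distrib_left sum_distrib_right sum_divide_distrib mult_ac sum.swap[of _ "set_pmf G"])
  finally show ?thesis
    by (simp add: surplus_eq expectation_G_eq_sum)
qed

lemma expected_relative_rung_gap_le: "(\<Sum>k\<in>{1..K}. rung_prob k * (1 - rung (k - 1) / rung k)) \<le> 4 * CARD('b) / K"
proof -
  have pos1: "rung 1 > 0"
    using rung_pos K_ge_2 by simp
  have term_le: "rung_prob k * (1 - rung (k - 1) / rung k) \<le> 2 / K * ((rung k - rung (k - 1)) / rung 1)"
    if k: "k \<in> {1..K}" for k
  proof -
    have step: "rung k - rung (k - 1) \<ge> 0" and first: "rung 1 \<le> rung k"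
      using rung_less[of "k - 1" k] rung_less[of 1 k] k by (cases "k = 1"; simp)+
    have "1 - rung (k - 1) / rung k = (rung k - rung (k - 1)) / rung k"
      using pos1 first by (simp add: field_simps)
    also have "\<dots> \<le> (rung k - rung (k - 1)) / rung 1"
      using step pos1 first by (intro divide_left_mono) auto
    moreover have "rung (k - 1) / rung k \<le> 1"
      using step pos1 first by simp
    ultimately show ?thesis
      using rung_prob_le[of k] rung_prob_nonneg[of k] step pos1
      by (intro mult_mono) auto
  qed
  have "(\<Sum>k\<in>{1..K}. rung_prob k * (1 - rung (k - 1) / rung k))
      \<le> (\<Sum>k\<in>{1..K}. 2 / K * ((rung k - rung (k - 1)) / rung 1))"
    by (rule sum_mono) (rule term_le)
  also have "\<dots> = 2 / K * ((\<Sum>k\<in>{1..K}. rung k - rung (k - 1)) / rung 1)"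
    by (simp only: sum_distrib_left sum_divide_distrib)
  also have "(\<Sum>k\<in>{1..m}. rung k - rung (k - 1)) = rung m - rung 0" for m
    by (induction m) simp_all
  also have "(rung K - rung 0) / rung 1 \<le> 2 * CARD('b) - 1"
    using surplus_le_rung_1 pos1 loser_score_nonneg by (simp add: rung_K rung_0 divide_le_eq)
  then have "2 / K * ((rung K - rung 0) / rung 1) \<le> 2 / K * (2 * CARD('b) - 1)"
    by (intro mult_left_mono) auto
  also have "\<dots> \<le> 4 * CARD('b) / K"
    using K_ge_2 by (simp add: field_simps)
  finally show ?thesis .
qed

lemma revenue_ladder_ge: "revenue v ladder_structure \<ge> S - S * (4 * CARD('b) / K)"
proof -
  have "S - revenue v ladder_structure = S * (\<Sum>k\<in>{1..K}. rung_prob k * (1 - rung (k - 1) / rung k))"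
    using sum_rung_prob by (simp add: revenue_ladder right_diff_distrib sum_subtractf)
  also have "\<dots> \<le> S * (4 * CARD('b) / K)"
    using expected_relative_rung_gap_le surplus_pos by (intro mult_left_mono) auto
  finally show ?thesis
    by simp
qed

end

context symmetric_env
begin

lemma exists_ladder_structure:
  assumes "\<And>j. v j > 0" "mean_score < S" "\<epsilon> > 0"
  shows "\<exists>x. info_structure G x \<and> calibrated x \<and> S - \<epsilon> \<le> revenue v x"
proof -
  define K where "K = nat \<lceil>4 * CARD('b) * S / \<epsilon>\<rceil> + 2"
  interpret ladder v G K
    by unfold_locales (use assms in \<open>auto simp: K_def\<close>)
  have "4 * CARD('b) * S / \<epsilon> \<le> K"
    unfolding K_def by linarith
  then have "S * (4 * CARD('b) / K) \<le> \<epsilon>"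
    using assms(3) K_ge_2 by (simp add: field_simps)
  then show ?thesis
    using info_structure_ladder calibrated_ladder revenue_ladder_ge by fastforce
qed

end

theorem mainTheorem3:
  fixes v :: "'b::finite \<Rightarrow> real" and G :: "('b \<Rightarrow> real) pmf" and \<epsilon> :: real
  assumes "CARD('b) \<ge> 2"
    and "\<forall>i. v i \<ge> 0"
    and "finite (set_pmf G)"
    and "\<forall>r\<in>set_pmf G. in_unit_cube r"
    and "exchangeable_env v G"
    and "\<epsilon> > 0"
  shows "\<exists>x. info_structure G x \<and> calibrated x \<and> revenue v x \<ge> surplus v G - \<epsilon>"
proof -
  interpret symmetric_env v G
    using assms by unfold_locales auto
  show ?thesis
  proof (cases "(\<forall>j. v j > 0) \<and> mean_score < surplus v G")
    case True
    then show ?thesis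
      using exists_ladder_structure \<open>\<epsilon> > 0\<close> by simp
  next
    case False
    then have "surplus v G \<le> revenue v uninformative"
      by (intro surplus_le_revenue_uninformative) auto
    then show ?thesis
      using info_structure_uninformative calibrated_uninformative \<open>\<epsilon> > 0\<close>
      by (intro exI[of _ uninformative]) simp
  qed
qed

end
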